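(* Assume the variety $\mathbf K$ axiomatized by $E$ satisfies (IT), is coherent and has the $\forall$-factorization property. Let $X,C$ be finite sets, $\mathcal A^*\in\mathsf{Sub}_r(\mathbf F(X)^*\times\mathbf F(C)^* )$, and let $\mathcal B_1^*,\dots,\mathcal B_n^*\in\mathsf{Sub}_r(\mathbf F(X)^* )$ be such that (a) $\pi_{\mathbf F(X)^*}^{-1}(\mathcal B_i^* )\le\mathcal A^*$ for all $i$, and (b) for every $\mathcal D^*\in\mathsf{Sub}_r(\mathbf F(X)^* )$ with $\pi_{\mathbf F(X)^*}^{-1}(\mathcal D^* )\le\mathcal A^*$ there is $i$ with $\mathcal D^*\le\mathcal B_i^*$. Then a homomorphism $\sigma:\mathbf F(X)\to\mathbf F(Z)$ is a $C$-unifier of $(\mathcal A,C)$ iff it is a unifier of some $\mathcal B_i$; that is, $U^{svr}_E(\mathcal A,C)=U_E(\mathcal B_1)\cup\dots\cup U_E(\mathcal B_n)$, as preordered sets (with the same preorder).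
   Context: $\mathbf F(Y)$ is the free $E$-algebra on finite $Y$; $\mathsf{Alg}^{op}_{fp}(E)$ is the opposite of the category of finitely presented $E$-algebras ($\mathcal B^*,f^*$ formal duals). $\mathsf{Sub}_r(V)$ is the poset of regular subobjects, $g^{-1}$ pullback, $\pi$ projections; regular subobjects of $\mathcal B^*$ correspond to finitely presented quotients of $\mathcal B$. (IT): whenever $f:\mathcal A\to\mathcal B$ is a homomorphism and $g:\mathcal A\to\mathcal C$ an injective homomorphism, there exist a homomorphism $h:\mathcal C\to\mathcal E$ and injective $h':\mathcal B\to\mathcal E$ with $h'f=hg$. Coherent: finitely generated subalgebras of finitely presented algebras are finitely presented. $\forall$-factorization property: for all objects $V,W$ of $\mathsf{Alg}^{op}_{fp}(E)$ and $T\in\mathsf{Sub}_r(V\times W)$ there are finitely many $B_1,\dots,B_n\in\mathsf{Sub}_r(W)$ with $\pi_W^{-1}(B_i)\le T$ and such that every $D\in\mathsf{Sub}_r(W)$ with $\pi_W^{-1}(D)\le T$ satisfies $D\le B_i$ for some $i$. A $C$-unifier of $(\mathcal A,C)$ is a homomorphism $\sigma:\mathbf F(X)\to\mathbf F(Z)$ with $\sigma^*\times1:\mathbf F(Z)^*\times\mathbf F(C)^*\to\mathbf F(X)^*\times\mathbf F(C)^*$ factoring through $\mathcal A^*\hookrightarrow\mathbf F(X)^*\times\mathbf F(C)^*$; $U^{svr}_E(\mathcal A,C)$ is the set of these. A unifier of $\mathcal B_i$ (case $C=\emptyset$) is a homomorphism $\sigma:\mathbf F(X)\to\mathbf F(Z)$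 factoring through the quotient map $\mathbf F(X)\to\mathcal B_i$; $U_E(\mathcal B_i)$ is the set of these. In both sets, $\gamma:\mathbf F(X)\to\mathbf F(W)$ is below $\sigma:\mathbf F(X)\to\mathbf F(Z)$ iff $k\circ\sigma=\gamma$ for some homomorphism $k:\mathbf F(Z)\to\mathbf F(W)$. *)

theory Defs
  imports Main
begin

datatype ('f, 'v) trm = Var 'v | Fun 'f "('f, 'v) trm list"

fun wf :: "('f \<Rightarrow> nat) \<Rightarrow> ('f, 'v) trm \<Rightarrow> bool" where
  "wf ar (Var x) = True"
| "wf ar (Fun f ts) = (length ts = ar f \<and> (\<forall>t\<in>set ts. wf ar t))"

fun vars :: "('f, 'v) trm \<Rightarrow> 'v set" where
  "vars (Var x) = {x}"
| "vars (Fun f ts) = \<Union> (vars ` set ts)"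

fun subst :: "('v \<Rightarrow> ('f, 'w) trm) \<Rightarrow> ('f, 'v) trm \<Rightarrow> ('f, 'w) trm" where
  "subst \<sigma> (Var x) = \<sigma> x"
| "subst \<sigma> (Fun f ts) = Fun f (map (subst \<sigma>) ts)"

definition eqs_wf :: "('f \<Rightarrow> nat) \<Rightarrow> (('f, 'v) trm \<times> ('f, 'v) trm) set \<Rightarrow> bool" where
  "eqs_wf ar E \<equiv> (\<forall>(l, r)\<in>E. wf ar l \<and> wf ar r)"

definition pres :: "('f \<Rightarrow> nat) \<Rightarrow> 'y set \<Rightarrow> (('f, 'y) trm \<times> ('f, 'y) trm) set \<Rightarrow> bool" where
  "pres ar Y R \<equiv> finite R \<and> (\<forall>(s, t)\<in>R. wf ar s \<and> wf ar t \<and> vars s \<subseteq> Y \<and> vars t \<subseteq> Y)"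

text \<open>The congruence on the term algebra generated by all E-instances and the pairs R.
  Its restriction to terms over Y is the kernel of the quotient map F(Y) -> F(Y)/Cg(R).
  With R = {} it is E-equivalence, i.e. the kernel of the map onto the free algebra.\<close>
inductive eqr :: "('f \<Rightarrow> nat) \<Rightarrow> (('f, 'v) trm \<times> ('f, 'v) trm) set
    \<Rightarrow> (('f, 'y) trm \<times> ('f, 'y) trm) set \<Rightarrow> ('f, 'y) trm \<Rightarrow> ('f, 'y) trm \<Rightarrow> bool"
  for ar E R where
  base: "(s, t) \<in> R \<Longrightarrow> eqr ar E R s t"
| ax: "(l, r) \<in> E \<Longrightarrow> (\<forall>x. wf ar (\<sigma> x)) \<Longrightarrow> eqr ar E R (subst \<sigma> l) (subst \<sigma> r)"
| refl: "wf ar t \<Longrightarrow> eqr ar E R t t"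
| sym: "eqr ar E R s t \<Longrightarrow> eqr ar E R t s"
| trans: "eqr ar E R s t \<Longrightarrow> eqr ar E R t u \<Longrightarrow> eqr ar E R s u"
| cong: "length ss = ar f \<Longrightarrow> length ts = ar f \<Longrightarrow> list_all2 (eqr ar E R) ss ts
          \<Longrightarrow> eqr ar E R (Fun f ss) (Fun f ts)"

definition ren_l :: "('f, 'x) trm \<Rightarrow> ('f, 'x + 'y) trm" where
  "ren_l t = subst (Var \<circ> Inl) t"

definition ren_r :: "('f, 'y) trm \<Rightarrow> ('f, 'x + 'y) trm" where
  "ren_r t = subst (Var \<circ> Inr) t"

definition ren_l_rel :: "(('f, 'x) trm \<times> ('f, 'x) trm) set \<Rightarrow> (('f, 'x + 'y) trm \<times> ('f, 'x + 'y) trm) set" where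
  "ren_l_rel R = (\<lambda>(s, t). (ren_l s, ren_l t)) ` R"

definition ren_r_rel :: "(('f, 'y) trm \<times> ('f, 'y) trm) set \<Rightarrow> (('f, 'x + 'y) trm \<times> ('f, 'x + 'y) trm) set" where
  "ren_r_rel R = (\<lambda>(s, t). (ren_r s, ren_r t)) ` R"

text \<open>Over the finitely presented algebra presented by
  relations Base, the regular subobject given by the finitely presented quotient with
  extra relations D is below the one given by extra relations B (D* \<le> B*) iff the
  congruence of B is contained in that of D.\<close>
definition sub_le :: "('f \<Rightarrow> nat) \<Rightarrow> (('f, 'v) trm \<times> ('f, 'v) trm) set
    \<Rightarrow> (('f, 'y) trm \<times> ('f, 'y) trm) set \<Rightarrow> (('f, 'y) trm \<times> ('f, 'y) trm) set
    \<Rightarrow> (('f, 'y) trm \<times> ('f, 'y) trm) set \<Rightarrow> bool" where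
  "sub_le ar E Base D B \<equiv> (\<forall>(s, t)\<in>B. eqr ar E (Base \<union> D) s t)"

type_synonym ('f, 'a) alg = "'a set \<times> ('f \<Rightarrow> 'a list \<Rightarrow> 'a)"

definition is_alg :: "('f \<Rightarrow> nat) \<Rightarrow> ('f, 'a) alg \<Rightarrow> bool" where
  "is_alg ar A \<equiv> (\<forall>f as. length as = ar f \<and> set as \<subseteq> fst A \<longrightarrow> snd A f as \<in> fst A)"

fun eval :: "('f, 'a) alg \<Rightarrow> ('v \<Rightarrow> 'a) \<Rightarrow> ('f, 'v) trm \<Rightarrow> 'a" where
  "eval A \<alpha> (Var x) = \<alpha> x"
| "eval A \<alpha> (Fun f ts) = snd A f (map (eval A \<alpha>) ts)"

definition inK :: "('f \<Rightarrow> nat) \<Rightarrow> (('f, 'v) trm \<times> ('f, 'v) trm) set \<Rightarrow> ('f, 'a) alg \<Rightarrow> bool" where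
  "inK ar E A \<equiv> is_alg ar A \<and>
     (\<forall>(l, r)\<in>E. \<forall>\<alpha>. (\<forall>x. \<alpha> x \<in> fst A) \<longrightarrow> eval A \<alpha> l = eval A \<alpha> r)"

definition hom :: "('f \<Rightarrow> nat) \<Rightarrow> ('f, 'a) alg \<Rightarrow> ('f, 'b) alg \<Rightarrow> ('a \<Rightarrow> 'b) \<Rightarrow> bool" where
  "hom ar A B h \<equiv> (\<forall>a\<in>fst A. h a \<in> fst B) \<and>
     (\<forall>f as. length as = ar f \<and> set as \<subseteq> fst A \<longrightarrow> h (snd A f as) = snd B f (map h as))"

text \<open>(IT) for the algebras of K whose carriers live in the universe type 'u.\<close>
definition IT :: "('f \<Rightarrow> nat) \<Rightarrow> (('f, 'v) trm \<times> ('f, 'v) trm) set \<Rightarrow> 'u itself \<Rightarrow> bool" where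
  "IT ar E U \<equiv> (\<forall>(A :: ('f, 'u) alg) (B :: ('f, 'u) alg) (C :: ('f, 'u) alg) f g.
      inK ar E A \<and> inK ar E B \<and> inK ar E C \<and> hom ar A B f \<and> hom ar A C g \<and> inj_on g (fst A)
      \<longrightarrow> (\<exists>(D :: ('f, 'u) alg) h h'. inK ar E D \<and> hom ar C D h \<and> hom ar B D h' \<and>
              inj_on h' (fst B) \<and> (\<forall>a\<in>fst A. h' (f a) = h (g a))))"

definition cls :: "('f \<Rightarrow> nat) \<Rightarrow> (('f, 'v) trm \<times> ('f, 'v) trm) set
    \<Rightarrow> (('f, 'y) trm \<times> ('f, 'y) trm) set \<Rightarrow> ('f, 'y) trm \<Rightarrow> ('f, 'y) trm set" where
  "cls ar E R t = {u. eqr ar E R t u}"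

text \<open>The finitely presented algebra F(Y)/Cg(R), realised on congruence classes.\<close>
definition Q :: "('f \<Rightarrow> nat) \<Rightarrow> (('f, 'v) trm \<times> ('f, 'v) trm) set \<Rightarrow> 'y set
    \<Rightarrow> (('f, 'y) trm \<times> ('f, 'y) trm) set \<Rightarrow> ('f, ('f, 'y) trm set) alg" where
  "Q ar E Y R = ({cls ar E R t | t. wf ar t \<and> vars t \<subseteq> Y},
                 (\<lambda>f Ls. cls ar E R (Fun f (map (\<lambda>L. SOME t. t \<in> L) Ls))))"

inductive_set gen :: "('f \<Rightarrow> nat) \<Rightarrow> ('f, 'a) alg \<Rightarrow> 'a set \<Rightarrow> 'a set" for ar A G where
  gen_base: "a \<in> G \<Longrightarrow> a \<in> gen ar A G"
| gen_op: "length as = ar f \<Longrightarrow> (\<forall>a\<in>set as. a \<in> gen ar A G) \<Longrightarrow> snd A f as \<in> gen ar A G"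

definition fin_pres :: "('f \<Rightarrow> nat) \<Rightarrow> (('f, 'v) trm \<times> ('f, 'v) trm) set \<Rightarrow> ('f, 'a) alg \<Rightarrow> bool" where
  "fin_pres ar E A \<equiv> (\<exists>(Y :: nat set) R h. finite Y \<and> pres ar Y R \<and>
      hom ar (Q ar E Y R) A h \<and> bij_betw h (fst (Q ar E Y R)) (fst A))"

text \<open>Coherence: finitely generated subalgebras of finitely presented algebras are
  finitely presented (every finitely presented algebra is isomorphic to some Q Y R with
  Y a finite set of naturals).\<close>
definition coherent :: "('f \<Rightarrow> nat) \<Rightarrow> (('f, 'v) trm \<times> ('f, 'v) trm) set \<Rightarrow> bool" where
  "coherent ar E \<equiv> (\<forall>(Y :: nat set) R G. finite Y \<and> pres ar Y R \<and> finite G \<and> G \<subseteq> fst (Q ar E Y R)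
      \<longrightarrow> fin_pres ar E (gen ar (Q ar E Y R) G, snd (Q ar E Y R)))"

text \<open>Objects V, W of Alg_fp^op are presented by (Y1,R1), (Y2,R2); V x W is the
  coproduct algebra presented by (Inl`Y1 \<union> Inr`Y2, R1' \<union> R2'); its regular subobjects
  are the finitely presented quotients, given by extra finite relations T; pulling back
  the subobject of W given by D along pi_W gives extra relations D'.\<close>
definition forall_fact :: "('f \<Rightarrow> nat) \<Rightarrow> (('f, 'v) trm \<times> ('f, 'v) trm) set \<Rightarrow> bool" where
  "forall_fact ar E \<equiv> (\<forall>(Y1 :: nat set) (Y2 :: nat set) R1 R2 T.
      finite Y1 \<and> finite Y2 \<and> pres ar Y1 R1 \<and> pres ar Y2 R2 \<and> pres ar (Inl ` Y1 \<union> Inr ` Y2) T \<longrightarrow>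
      (\<exists>Bs. (\<forall>B\<in>set Bs. pres ar Y2 B \<and>
                sub_le ar E (ren_l_rel R1 \<union> ren_r_rel R2) (ren_r_rel B) T) \<and>
            (\<forall>D. pres ar Y2 D \<and> sub_le ar E (ren_l_rel R1 \<union> ren_r_rel R2) (ren_r_rel D) T
                 \<longrightarrow> (\<exists>B\<in>set Bs. sub_le ar E R2 D B))))"

text \<open>A homomorphism F(X) -> F(Z) is given by a substitution sigma with sigma x a
  well-formed term over Z for x in X. sigma* x 1 is dual to the homomorphism
  F(X+C) -> F(Z+C) extending sigma by the identity on C; it factors through
  A* iff that homomorphism kills the relations of A.\<close>
definition C_unifier :: "('f \<Rightarrow> nat) \<Rightarrow> (('f, 'v) trm \<times> ('f, 'v) trm) set
    \<Rightarrow> (('f, 'x + 'x) trm \<times> ('f, 'x + 'x) trm) set \<Rightarrow> ('x \<Rightarrow> ('f, 'z) trm) \<Rightarrow> bool" where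
  "C_unifier ar E RA \<sigma> \<equiv>
     (let \<tau> = case_sum (\<lambda>x. ren_l (\<sigma> x)) (\<lambda>c. Var (Inr c)) :: 'x + 'x \<Rightarrow> ('f, 'z + 'x) trm
      in \<forall>(s, t)\<in>RA. eqr ar E ({} :: (('f, 'z + 'x) trm \<times> ('f, 'z + 'x) trm) set) (subst \<tau> s) (subst \<tau> t))"

definition unifier :: "('f \<Rightarrow> nat) \<Rightarrow> (('f, 'v) trm \<times> ('f, 'v) trm) set
    \<Rightarrow> (('f, 'x) trm \<times> ('f, 'x) trm) set \<Rightarrow> ('x \<Rightarrow> ('f, 'z) trm) \<Rightarrow> bool" where
  "unifier ar E B \<sigma> \<equiv>
     (\<forall>(s, t)\<in>B. eqr ar E ({} :: (('f, 'z) trm \<times> ('f, 'z) trm) set) (subst \<sigma> s) (subst \<sigma> t))"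

end

theory Submission imports Defs begin

text \<open>Write \<tau> for the extension of \<sigma> by the identity on C. If \<tau> unifies the relations RA
  of \<A>, consider the finitely presented algebras \<A>' = F(X)/ker \<sigma>, \<B>' = F(X + C)/Cg(ker \<sigma>)
  and F(Z). The inclusion X \<subseteq> X + C and \<sigma> induce maps f : \<A>' \<rightarrow> \<B>' and g : \<A>' \<rightarrow> F(Z),
  and g is injective. Amalgamating them by (IT) gives h : F(Z) \<rightarrow> \<D> and an injective
  h' : \<B>' \<rightarrow> \<D>; since h' factors through \<tau> on generators and \<tau> s = \<tau> t holds in every
  member of the variety, injectivity of h' shows that every relation s = t of RA already
  follows from ker \<sigma>. By compactness finitely many relations D \<subseteq> ker \<sigma> suffice, so
  the pullback of D* is below \<A>*, hence D* \<le> B_i* for some i by (b), and \<sigma>, which unifies D, unifies B_i.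
  Conversely a unifier of B_i unifies ren_l B_i, from which RA follows by (a).\<close>

lemma subst_subst: "subst \<theta> (subst \<sigma> t) = subst (subst \<theta> \<circ> \<sigma>) t"
  by (induction t) auto

lemma subst_cong: "(\<And>x. x \<in> vars t \<Longrightarrow> \<theta>1 x = \<theta>2 x) \<Longrightarrow> subst \<theta>1 t = subst \<theta>2 t"
  by (induction t) auto

lemma subst_Var: "subst Var t = t"
  by (induction t) (auto simp: map_idI)

lemma wf_subst: "wf ar t \<Longrightarrow> (\<And>x. x \<in> vars t \<Longrightarrow> wf ar (\<theta> x)) \<Longrightarrow> wf ar (subst \<theta> t)"
  by (induction t) auto

lemma vars_subst: "vars (subst \<theta> t) = (\<Union>x\<in>vars t. vars (\<theta> x))"
  by (induction t) auto

lemma subst_closed: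
  assumes "wf ar t" "vars t \<subseteq> V" "\<And>x. wf ar (\<theta> x)" "\<And>x. x \<in> V \<Longrightarrow> vars (\<theta> x) \<subseteq> W"
  shows "wf ar (subst \<theta> t)" and "vars (subst \<theta> t) \<subseteq> W"
  using assms by (auto intro!: wf_subst simp: vars_subst)

lemma wf_ren_l: "wf ar u \<Longrightarrow> wf ar (ren_l u)"
  unfolding ren_l_def by (auto intro: wf_subst)

lemma presD: "pres ar Y R \<Longrightarrow> (s, t) \<in> R \<Longrightarrow> wf ar s \<and> wf ar t \<and> vars s \<subseteq> Y \<and> vars t \<subseteq> Y"
  unfolding pres_def by blast

context
  fixes ar :: "'f \<Rightarrow> nat" and E :: "(('f, 'v) trm \<times> ('f, 'v) trm) set"
begin

lemma eqr_subst:
  assumes "eqr ar E R s t" "\<And>x. wf ar (\<theta> x)"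
    "\<And>a b. (a, b) \<in> R \<Longrightarrow> eqr ar E R' (subst \<theta> a) (subst \<theta> b)"
  shows "eqr ar E R' (subst \<theta> s) (subst \<theta> t)"
  using assms(1)
proof (induction rule: eqr.induct)
  case (base s t) then show ?case using assms(3) by blast
next
  case (ax l r \<sigma>)
  have "eqr ar E R' (subst (subst \<theta> \<circ> \<sigma>) l) (subst (subst \<theta> \<circ> \<sigma>) r)"
    by (rule eqr.ax) (use ax assms(2) in \<open>auto intro!: wf_subst\<close>)
  then show ?case by (simp add: subst_subst)
next
  case (refl t) then show ?case by (intro eqr.refl wf_subst) (auto simp: assms(2))
next
  case (sym s t) then show ?case by (blast intro: eqr.sym)
next
  case (trans s t u) then show ?case by (blast intro: eqr.trans)
next
  case (cong ss f ts)
  have "list_all2 (eqr ar E R') (map (subst \<theta>) ss) (map (subst \<theta>) ts)"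
    using cong(3) by (auto simp: list_all2_map1 list_all2_map2 elim: list_all2_mono)
  then show ?case using cong by (auto intro: eqr.cong)
qed

lemma eqr_ren_l: "eqr ar E {} s t \<Longrightarrow> eqr ar E {} (ren_l s) (ren_l t)"
  unfolding ren_l_def by (rule eqr_subst) auto

lemma eqr_mono: "eqr ar E R s t \<Longrightarrow> R \<subseteq> R' \<Longrightarrow> eqr ar E R' s t"
proof (induction rule: eqr.induct)
  case (cong ss f ts)
  then show ?case by (auto intro!: eqr.cong elim: list_all2_mono)
qed (auto intro: eqr.intros)

lemma eqr_finite_support:
  "eqr ar E R s t \<Longrightarrow> \<exists>R0. finite R0 \<and> R0 \<subseteq> R \<and> eqr ar E R0 s t"
proof (induction rule: eqr.induct)
  case (base s t) then show ?case by (intro exI[of _ "{(s, t)}"]) (auto intro: eqr.base)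
next
  case (ax l r \<sigma>) then show ?case by (intro exI[of _ "{}"]) (auto intro: eqr.ax)
next
  case (refl t) then show ?case by (intro exI[of _ "{}"]) (auto intro: eqr.refl)
next
  case (sym s t) then show ?case by (blast intro: eqr.sym)
next
  case (trans s t u)
  then obtain R1 R2 where "finite R1" "R1 \<subseteq> R" "eqr ar E R1 s t"
    and "finite R2" "R2 \<subseteq> R" "eqr ar E R2 t u"
    by blast
  then show ?case by (intro exI[of _ "R1 \<union> R2"]) (auto intro: eqr.trans eqr_mono)
next
  case (cong ss f ts)
  have "\<exists>R0. finite R0 \<and> R0 \<subseteq> R \<and> list_all2 (eqr ar E R0) ss ts"
    if "list_all2 (\<lambda>s t. \<exists>R0. finite R0 \<and> R0 \<subseteq> R \<and> eqr ar E R0 s t) ss ts" for ss ts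
    using that
  proof (induction rule: list_all2_induct)
    case (Cons s ss t ts)
    then obtain R1 R2 where "finite R1" "R1 \<subseteq> R" "eqr ar E R1 s t"
      and "finite R2" "R2 \<subseteq> R" "list_all2 (eqr ar E R2) ss ts"
      by blast
    then show ?case
      by (intro exI[of _ "R1 \<union> R2"]) (auto intro: eqr_mono elim: list_all2_mono)
  qed auto
  moreover have "list_all2 (\<lambda>s t. \<exists>R0. finite R0 \<and> R0 \<subseteq> R \<and> eqr ar E R0 s t) ss ts"
    using cong(3) by (rule list_all2_mono) blast
  ultimately obtain R0 where "finite R0" "R0 \<subseteq> R" "list_all2 (eqr ar E R0) ss ts"
    by blast
  then show ?case using cong by (auto intro: eqr.cong)
qed

lemma eqr_finite_support_set:
  assumes "finite P" "\<forall>(s, t)\<in>P. eqr ar E R s t"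
  shows "\<exists>R0. finite R0 \<and> R0 \<subseteq> R \<and> (\<forall>(s, t)\<in>P. eqr ar E R0 s t)"
proof -
  have "\<forall>p\<in>P. \<exists>R0. finite R0 \<and> R0 \<subseteq> R \<and> eqr ar E R0 (fst p) (snd p)"
  proof
    fix p assume "p \<in> P"
    then have "eqr ar E R (fst p) (snd p)" using assms(2) by (auto simp: split_beta)
    then show "\<exists>R0. finite R0 \<and> R0 \<subseteq> R \<and> eqr ar E R0 (fst p) (snd p)"
      by (rule eqr_finite_support)
  qed
  then obtain F where F: "\<forall>p\<in>P. finite (F p) \<and> F p \<subseteq> R \<and> eqr ar E (F p) (fst p) (snd p)"
    by (metis bchoice)
  show ?thesis
  proof (intro exI conjI)
    show "finite (\<Union> (F ` P))" "\<Union> (F ` P) \<subseteq> R" using F assms(1) by auto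
    show "\<forall>(s, t)\<in>P. eqr ar E (\<Union> (F ` P)) s t"
    proof clarify
      fix s t assume "(s, t) \<in> P"
      then have "eqr ar E (F (s, t)) s t" "F (s, t) \<subseteq> \<Union> (F ` P)" using F by force+
      then show "eqr ar E (\<Union> (F ` P)) s t" by (rule eqr_mono)
    qed
  qed
qed

lemma eval_subst: "eval A \<beta> (subst \<theta> t) = eval A (\<lambda>x. eval A \<beta> (\<theta> x)) t"
  by (induction t) (simp_all add: comp_def cong: map_cong)

lemma eval_cong: "(\<And>x. x \<in> vars t \<Longrightarrow> \<beta>1 x = \<beta>2 x) \<Longrightarrow> eval A \<beta>1 t = eval A \<beta>2 t"
proof (induction t)
  case (Fun f ts)
  then have "map (eval A \<beta>1) ts = map (eval A \<beta>2) ts" by auto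
  then show ?case by (simp only: eval.simps)
qed simp

lemma eval_carrier:
  "is_alg ar A \<Longrightarrow> wf ar t \<Longrightarrow> (\<And>x. x \<in> vars t \<Longrightarrow> \<beta> x \<in> fst A) \<Longrightarrow> eval A \<beta> t \<in> fst A"
proof (induction t)
  case (Fun f ts)
  then have "set (map (eval A \<beta>) ts) \<subseteq> fst A" by auto
  then show ?case using Fun.prems unfolding is_alg_def by auto
qed simp

lemma hom_eval:
  assumes "hom ar A B h" "is_alg ar A"
  shows "wf ar t \<Longrightarrow> (\<And>x. x \<in> vars t \<Longrightarrow> \<beta> x \<in> fst A)
    \<Longrightarrow> h (eval A \<beta> t) = eval B (\<lambda>x. h (\<beta> x)) t"
proof (induction t)
  case (Fun f ts)
  have "set (map (eval A \<beta>) ts) \<subseteq> fst A"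
    using Fun.prems by (auto intro!: eval_carrier[OF assms(2)])
  then have "h (eval A \<beta> (Fun f ts)) = snd B f (map h (map (eval A \<beta>) ts))"
    using Fun.prems assms(1) unfolding hom_def by auto
  also have "map h (map (eval A \<beta>) ts) = map (eval B (\<lambda>x. h (\<beta> x))) ts"
    using Fun by auto
  finally show ?case by simp
qed simp

lemma eqr_sound:
  assumes "inK ar E D" "\<And>x. \<beta> x \<in> fst D"
  shows "eqr ar E {} s t \<Longrightarrow> eval D \<beta> s = eval D \<beta> t"
proof (induction rule: eqr.induct)
  case (ax l r \<sigma>)
  have "is_alg ar D" using assms(1) unfolding inK_def by simp
  then have "\<forall>x. eval D \<beta> (\<sigma> x) \<in> fst D"
    using ax(2) assms(2) by (auto intro!: eval_carrier)
  then have "eval D (\<lambda>x. eval D \<beta> (\<sigma> x)) l = eval D (\<lambda>x. eval D \<beta> (\<sigma> x)) r"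
    using assms(1) ax(1) unfolding inK_def by fast
  then show ?case by (simp only: eval_subst)
next
  case (cong ss f ts)
  then have "map (eval D \<beta>) ss = map (eval D \<beta>) ts"
    by (auto simp: list_all2_conv_all_nth intro: nth_equalityI)
  then show ?case by simp
qed auto

text \<open>F(V)/Cg(R) realised inside the universe ('f, nat) trm of (IT): each class is represented
  by a canonical member, whose generators are renamed into nat by e, injective on V.\<close>

definition canon :: "(('f, 'y) trm \<times> ('f, 'y) trm) set \<Rightarrow> 'y set \<Rightarrow> ('f, 'y) trm \<Rightarrow> ('f, 'y) trm"
  where "canon R V t = (SOME u. eqr ar E R t u \<and> wf ar u \<and> vars u \<subseteq> V)"

definition canon_code :: "(('f, 'y) trm \<times> ('f, 'y) trm) set \<Rightarrow> 'y set \<Rightarrow> ('y \<Rightarrow> nat)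
    \<Rightarrow> ('f, 'y) trm \<Rightarrow> ('f, nat) trm"
  where "canon_code R V e t = subst (Var \<circ> e) (canon R V t)"

definition decode :: "'y set \<Rightarrow> ('y \<Rightarrow> nat) \<Rightarrow> ('f, nat) trm \<Rightarrow> ('f, 'y) trm"
  where "decode V e a = subst (\<lambda>n. Var (inv_into V e n)) a"

definition quot_alg :: "(('f, 'y) trm \<times> ('f, 'y) trm) set \<Rightarrow> 'y set \<Rightarrow> ('y \<Rightarrow> nat)
    \<Rightarrow> ('f, ('f, nat) trm) alg"
  where "quot_alg R V e = ({canon_code R V e t | t. wf ar t \<and> vars t \<subseteq> V},
    \<lambda>f as. canon_code R V e (Fun f (map (decode V e) as)))"

definition quot_map :: "'x set \<Rightarrow> ('x \<Rightarrow> nat) \<Rightarrow> ('x \<Rightarrow> ('f, 'y) trm)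
    \<Rightarrow> (('f, 'y) trm \<times> ('f, 'y) trm) set \<Rightarrow> 'y set \<Rightarrow> ('y \<Rightarrow> nat) \<Rightarrow> ('f, nat) trm \<Rightarrow> ('f, nat) trm"
  where "quot_map VA eA \<theta> RB VB eB a = canon_code RB VB eB (subst \<theta> (decode VA eA a))"

lemma canon_spec:
  assumes "wf ar t" "vars t \<subseteq> V"
  shows "eqr ar E R t (canon R V t) \<and> wf ar (canon R V t) \<and> vars (canon R V t) \<subseteq> V"
  unfolding canon_def by (rule someI[of _ t]) (use assms in \<open>auto intro: eqr.refl\<close>)

lemma canon_eq: "eqr ar E R s t \<Longrightarrow> canon R V s = canon R V t"
  unfolding canon_def by (metis eqr.sym eqr.trans)

lemma canon_code_eq: "eqr ar E R s t \<Longrightarrow> canon_code R V e s = canon_code R V e t"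
  unfolding canon_code_def by (simp add: canon_eq)

lemma decode_rename: "inj_on e V \<Longrightarrow> vars u \<subseteq> V \<Longrightarrow> decode V e (subst (Var \<circ> e) u) = u"
  unfolding decode_def subst_subst by (subst (2) subst_Var[symmetric], rule subst_cong) auto

lemma decode_canon_code:
  "inj_on e V \<Longrightarrow> wf ar t \<Longrightarrow> vars t \<subseteq> V \<Longrightarrow> decode V e (canon_code R V e t) = canon R V t"
  unfolding canon_code_def by (rule decode_rename) (use canon_spec[of t V R] in auto)

lemma canon_code_eq_iff:
  assumes "inj_on e V" "wf ar s" "vars s \<subseteq> V" "wf ar t" "vars t \<subseteq> V"
  shows "canon_code R V e s = canon_code R V e t \<longleftrightarrow> eqr ar E R s t"
proof
  assume "canon_code R V e s = canon_code R V e t"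
  then have "canon R V s = canon R V t" using decode_canon_code assms by metis
  then show "eqr ar E R s t" using canon_spec[of s V R] canon_spec[of t V R] assms
    by (metis eqr.sym eqr.trans)
qed (rule canon_code_eq)

lemma canon_code_in_quot_alg: "wf ar t \<Longrightarrow> vars t \<subseteq> V \<Longrightarrow> canon_code R V e t \<in> fst (quot_alg R V e)"
  unfolding quot_alg_def by auto

lemma quot_alg_carrierD:
  assumes "a \<in> fst (quot_alg R V e)" "inj_on e V"
  shows "a = canon_code R V e (decode V e a) \<and> wf ar (decode V e a) \<and> vars (decode V e a) \<subseteq> V"
proof -
  obtain t where t: "a = canon_code R V e t" "wf ar t" "vars t \<subseteq> V"
    using assms(1) unfolding quot_alg_def by auto
  have d: "decode V e a = canon R V t"
    unfolding t(1) by (rule decode_canon_code[OF assms(2) t(2,3)])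
  have "a = canon_code R V e (canon R V t)"
    unfolding t(1) by (rule canon_code_eq) (use canon_spec[OF t(2,3)] in blast)
  then show ?thesis unfolding d using canon_spec[OF t(2,3)] by blast
qed

lemma quot_alg_listD:
  "set as \<subseteq> fst (quot_alg R V e) \<Longrightarrow> inj_on e V \<Longrightarrow>
   as = map (canon_code R V e) (map (decode V e) as) \<and>
   (\<forall>t\<in>set (map (decode V e) as). wf ar t \<and> vars t \<subseteq> V)"
proof (induction as)
  case (Cons a as)
  then show ?case using quot_alg_carrierD[of a R V e] by simp
qed simp

lemma quot_alg_op:
  assumes "inj_on e V" "length ts = ar f" "\<forall>t\<in>set ts. wf ar t \<and> vars t \<subseteq> V"
  shows "snd (quot_alg R V e) f (map (canon_code R V e) ts) = canon_code R V e (Fun f ts)"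
proof -
  have m: "map (decode V e) (map (canon_code R V e) ts) = map (canon R V) ts"
    using assms(1,3) decode_canon_code by (induction ts) auto
  have "list_all2 (eqr ar E R) (map (canon R V) ts) ts"
    using assms(3) by (auto simp: list_all2_conv_all_nth intro!: eqr.sym[OF conjunct1[OF canon_spec]])
  then have "eqr ar E R (Fun f (map (canon R V) ts)) (Fun f ts)"
    using assms(2) by (intro eqr.cong) auto
  then show ?thesis unfolding quot_alg_def snd_conv m by (rule canon_code_eq)
qed

lemma quot_alg_is_alg: "inj_on e V \<Longrightarrow> is_alg ar (quot_alg R V e)"
  unfolding is_alg_def
proof (intro allI impI)
  fix f as
  assume "inj_on e V" and as: "length as = ar f \<and> set as \<subseteq> fst (quot_alg R V e)"
  define ts where "ts = map (decode V e) as"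
  have ts: "as = map (canon_code R V e) ts" "\<forall>t\<in>set ts. wf ar t \<and> vars t \<subseteq> V"
    using quot_alg_listD as \<open>inj_on e V\<close> unfolding ts_def by blast+
  have len: "length ts = ar f" using as ts by simp
  have "snd (quot_alg R V e) f as = canon_code R V e (Fun f ts)"
    unfolding ts(1) by (rule quot_alg_op[OF \<open>inj_on e V\<close> len ts(2)])
  moreover have "wf ar (Fun f ts) \<and> vars (Fun f ts) \<subseteq> V" using ts len by auto
  ultimately show "snd (quot_alg R V e) f as \<in> fst (quot_alg R V e)"
    unfolding quot_alg_def fst_conv by blast
qed

lemma quot_alg_eval:
  assumes "inj_on e V" "wf ar t" "\<And>x. x \<in> vars t \<Longrightarrow> wf ar (\<theta> x) \<and> vars (\<theta> x) \<subseteq> V"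
  shows "eval (quot_alg R V e) (\<lambda>x. canon_code R V e (\<theta> x)) t = canon_code R V e (subst \<theta> t)"
  using assms(2,3)
proof (induction t)
  case (Fun f ts)
  have "map (eval (quot_alg R V e) (\<lambda>x. canon_code R V e (\<theta> x))) ts
      = map (canon_code R V e) (map (subst \<theta>) ts)"
    using Fun by auto
  then have "eval (quot_alg R V e) (\<lambda>x. canon_code R V e (\<theta> x)) (Fun f ts)
      = snd (quot_alg R V e) f (map (canon_code R V e) (map (subst \<theta>) ts))"
    by (simp only: eval.simps)
  also have "\<dots> = canon_code R V e (Fun f (map (subst \<theta>) ts))"
    using Fun.prems by (intro quot_alg_op[OF assms(1)]) (auto intro!: wf_subst simp: vars_subst)
  finally show ?case by simp
qed simp

lemma quot_alg_inK:
  assumes "eqs_wf ar E" "inj_on e V"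
  shows "inK ar E (quot_alg R V e)"
  unfolding inK_def
proof (intro conjI quot_alg_is_alg assms ballI allI impI, clarify)
  fix l r :: "('f, 'v) trm" and \<alpha> :: "'v \<Rightarrow> ('f, nat) trm"
  assume lr: "(l, r) \<in> E" and \<alpha>: "\<forall>x. \<alpha> x \<in> fst (quot_alg R V e)"
  define \<theta> where "\<theta> x = decode V e (\<alpha> x)" for x
  have \<theta>: "\<alpha> = (\<lambda>x. canon_code R V e (\<theta> x))" "\<And>x. wf ar (\<theta> x) \<and> vars (\<theta> x) \<subseteq> V"
    using quot_alg_carrierD[OF \<alpha>[rule_format] assms(2)] unfolding \<theta>_def by auto
  have "wf ar l" "wf ar r" using lr assms(1) unfolding eqs_wf_def by auto
  moreover have "eqr ar E R (subst \<theta> l) (subst \<theta> r)" using lr \<theta>(2) by (auto intro: eqr.ax)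
  ultimately show "eval (quot_alg R V e) \<alpha> l = eval (quot_alg R V e) \<alpha> r"
    unfolding \<theta>(1) using quot_alg_eval[OF assms(2)] \<theta>(2) canon_code_eq by metis
qed

lemma hom_canon_code:
  assumes "inj_on e V" "hom ar (quot_alg R V e) D h" "wf ar u" "vars u \<subseteq> V"
  shows "h (canon_code R V e u) = eval D (\<lambda>v. h (canon_code R V e (Var v))) u"
proof -
  have "canon_code R V e u = eval (quot_alg R V e) (\<lambda>v. canon_code R V e (Var v)) u"
    using quot_alg_eval[OF assms(1,3), where \<theta>=Var and R=R] assms(4) by (simp add: subst_Var subset_iff)
  moreover have "h (eval (quot_alg R V e) (\<lambda>v. canon_code R V e (Var v)) u)
      = eval D (\<lambda>v. h (canon_code R V e (Var v))) u"
    using assms(3,4) by (intro hom_eval[OF assms(2) quot_alg_is_alg[OF assms(1)]])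
      (auto intro!: canon_code_in_quot_alg)
  ultimately show ?thesis by simp
qed

lemma quot_map_canon_code:
  assumes "\<And>x. wf ar (\<theta> x)" "\<And>a b. (a, b) \<in> RA \<Longrightarrow> eqr ar E RB (subst \<theta> a) (subst \<theta> b)"
    "inj_on eA VA" "wf ar t" "vars t \<subseteq> VA"
  shows "quot_map VA eA \<theta> RB VB eB (canon_code RA VA eA t) = canon_code RB VB eB (subst \<theta> t)"
proof -
  have "eqr ar E RA (canon RA VA t) t" using canon_spec[OF assms(4,5)] eqr.sym by blast
  then have "eqr ar E RB (subst \<theta> (canon RA VA t)) (subst \<theta> t)"
    using eqr_subst assms(1,2) by blast
  then show ?thesis
    unfolding quot_map_def decode_canon_code[OF assms(3,4,5)] by (rule canon_code_eq)
qed

lemma quot_map_hom: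
  assumes "\<And>x. wf ar (\<theta> x)" "\<And>x. x \<in> VA \<Longrightarrow> vars (\<theta> x) \<subseteq> VB"
    "\<And>a b. (a, b) \<in> RA \<Longrightarrow> eqr ar E RB (subst \<theta> a) (subst \<theta> b)"
    "inj_on eA VA" "inj_on eB VB"
  shows "hom ar (quot_alg RA VA eA) (quot_alg RB VB eB) (quot_map VA eA \<theta> RB VB eB)"
  unfolding hom_def
proof (intro conjI allI impI ballI)
  fix a assume "a \<in> fst (quot_alg RA VA eA)"
  then have "wf ar (decode VA eA a)" "vars (decode VA eA a) \<subseteq> VA"
    using quot_alg_carrierD assms(4) by blast+
  then show "quot_map VA eA \<theta> RB VB eB a \<in> fst (quot_alg RB VB eB)"
    unfolding quot_map_def
    using subst_closed[where \<theta>=\<theta> and V=VA and W=VB, OF _ _ assms(1,2)] by (intro canon_code_in_quot_alg)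
next
  fix f as assume as: "length as = ar f \<and> set as \<subseteq> fst (quot_alg RA VA eA)"
  define ts where "ts = map (decode VA eA) as"
  have ts: "as = map (canon_code RA VA eA) ts" "\<forall>t\<in>set ts. wf ar t \<and> vars t \<subseteq> VA"
    using quot_alg_listD as assms(4) unfolding ts_def by blast+
  have len: "length ts = ar f" using as ts by simp
  have op: "snd (quot_alg RA VA eA) f as = canon_code RA VA eA (Fun f ts)"
    unfolding ts(1) by (rule quot_alg_op[OF assms(4) len ts(2)])
  have "quot_map VA eA \<theta> RB VB eB (snd (quot_alg RA VA eA) f as)
      = canon_code RB VB eB (Fun f (map (subst \<theta>) ts))"
    unfolding op using ts(2) len by (subst quot_map_canon_code[OF assms(1,3,4)]) auto
  also have "\<dots> = snd (quot_alg RB VB eB) f (map (canon_code RB VB eB) (map (subst \<theta>) ts))"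
    using len ts(2) subst_closed[where \<theta>=\<theta> and V=VA and W=VB, OF _ _ assms(1,2)]
    by (intro quot_alg_op[OF assms(5), symmetric]) (auto simp del: subset_iff)
  also have "map (canon_code RB VB eB) (map (subst \<theta>) ts) = map (quot_map VA eA \<theta> RB VB eB) as"
    unfolding ts(1) map_map comp_def using ts(2) quot_map_canon_code[OF assms(1,3,4)] by simp
  finally show "quot_map VA eA \<theta> RB VB eB (snd (quot_alg RA VA eA) f as)
      = snd (quot_alg RB VB eB) f (map (quot_map VA eA \<theta> RB VB eB) as)" .
qed

lemma quot_map_inj_on:
  assumes "\<And>x. wf ar (\<theta> x)" "\<And>x. x \<in> VA \<Longrightarrow> vars (\<theta> x) \<subseteq> VB" "inj_on eA VA" "inj_on eB VB"
    and reflects: "\<And>t1 t2. wf ar t1 \<Longrightarrow> vars t1 \<subseteq> VA \<Longrightarrow> wf ar t2 \<Longrightarrow> vars t2 \<subseteq> VA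
      \<Longrightarrow> eqr ar E RB (subst \<theta> t1) (subst \<theta> t2) \<Longrightarrow> eqr ar E RA t1 t2"
  shows "inj_on (quot_map VA eA \<theta> RB VB eB) (fst (quot_alg RA VA eA))"
proof (rule inj_onI)
  fix a1 a2 assume a: "a1 \<in> fst (quot_alg RA VA eA)" "a2 \<in> fst (quot_alg RA VA eA)"
    and eq: "quot_map VA eA \<theta> RB VB eB a1 = quot_map VA eA \<theta> RB VB eB a2"
  define t1 t2 where "t1 = decode VA eA a1" and "t2 = decode VA eA a2"
  have t: "a1 = canon_code RA VA eA t1" "wf ar t1" "vars t1 \<subseteq> VA"
      "a2 = canon_code RA VA eA t2" "wf ar t2" "vars t2 \<subseteq> VA"
    using quot_alg_carrierD[OF _ assms(3)] a unfolding t1_def t2_def by blast+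
  have "canon_code RB VB eB (subst \<theta> t1) = canon_code RB VB eB (subst \<theta> t2)"
    using eq unfolding quot_map_def t1_def t2_def .
  then have "eqr ar E RB (subst \<theta> t1) (subst \<theta> t2)"
    using canon_code_eq_iff[OF assms(4)] subst_closed[where \<theta>=\<theta> and V=VA and W=VB, OF _ _ assms(1,2)] t
    by blast
  then have "eqr ar E RA t1 t2" using reflects t by blast
  then show "a1 = a2" using t canon_code_eq by simp
qed

definition subst_ker :: "'x set \<Rightarrow> ('x \<Rightarrow> ('f, 'z) trm) \<Rightarrow> (('f, 'x) trm \<times> ('f, 'x) trm) set"
  where "subst_ker X \<sigma> = {(u, v). wf ar u \<and> wf ar v \<and> vars u \<subseteq> X \<and> vars v \<subseteq> X \<and>
    eqr ar E {} (subst \<sigma> u) (subst \<sigma> v)}"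

text \<open>The amalgamation of F(X)/ker \<sigma> \<rightarrow> F(X + C)/Cg(ker \<sigma>) along the embedding
  F(X)/ker \<sigma> \<rightarrow> F(Z) induced by \<sigma>, provided by (IT).\<close>

lemma subst_ker_amalgamation:
  fixes \<sigma> :: "'x \<Rightarrow> ('f, 'z) trm" and V :: "('x + 'c) set"
  assumes "eqs_wf ar E" "IT ar E TYPE(('f, nat) trm)" "finite X"
    "inj_on eB V" "inj_on eC Z" "Inl ` X \<subseteq> V"
    "\<And>x. wf ar (\<sigma> x)" "\<And>x. x \<in> X \<Longrightarrow> vars (\<sigma> x) \<subseteq> Z"
  obtains D h h' where "inK ar E (D :: ('f, ('f, nat) trm) alg)"
    "hom ar (quot_alg {} Z eC) D h"
    "hom ar (quot_alg (ren_l_rel (subst_ker X \<sigma>)) V eB) D h'"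
    "inj_on h' (fst (quot_alg (ren_l_rel (subst_ker X \<sigma>)) V eB))"
    "\<And>x. x \<in> X \<Longrightarrow>
      h (canon_code {} Z eC (\<sigma> x)) = h' (canon_code (ren_l_rel (subst_ker X \<sigma>)) V eB (Var (Inl x)))"
proof -
  obtain eA :: "'x \<Rightarrow> nat" where eA: "inj_on eA X"
    using finite_imp_inj_to_nat_seg assms(3) by blast
  define K where "K = subst_ker X \<sigma>"
  define f where "f = quot_map X eA (Var \<circ> Inl) (ren_l_rel K) V eB"
  define g where "g = quot_map X eA \<sigma> {} Z eC"
  have hom_f: "hom ar (quot_alg K X eA) (quot_alg (ren_l_rel K) V eB) f"
    unfolding f_def using eA assms(4,6)
    by (intro quot_map_hom) (auto simp: ren_l_rel_def ren_l_def intro: eqr.base)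
  have K_eqr: "eqr ar E {} (subst \<sigma> a) (subst \<sigma> b)" if "(a, b) \<in> K" for a b
    using that unfolding K_def subst_ker_def by blast
  have hom_g: "hom ar (quot_alg K X eA) (quot_alg {} Z eC) g"
    unfolding g_def by (rule quot_map_hom[OF assms(7,8) K_eqr eA assms(5)])
  have "inj_on g (fst (quot_alg K X eA))"
    unfolding g_def
    by (rule quot_map_inj_on[OF assms(7,8) eA assms(5)]) (auto simp: K_def subst_ker_def intro: eqr.base)
  moreover have "inK ar E (quot_alg K X eA)" "inK ar E (quot_alg (ren_l_rel K) V eB)"
    "inK ar E (quot_alg {} Z eC)"
    using quot_alg_inK[OF assms(1)] eA assms(4,5) by blast+
  ultimately obtain D h h' where D: "inK ar E (D :: ('f, ('f, nat) trm) alg)"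
      "hom ar (quot_alg {} Z eC) D h" "hom ar (quot_alg (ren_l_rel K) V eB) D h'"
      "inj_on h' (fst (quot_alg (ren_l_rel K) V eB))"
      "\<And>a. a \<in> fst (quot_alg K X eA) \<Longrightarrow> h' (f a) = h (g a)"
    using assms(2)[unfolded IT_def, rule_format, of "quot_alg K X eA" "quot_alg (ren_l_rel K) V eB"
      "quot_alg {} Z eC" f g] hom_f hom_g
    by blast
  have gen: "h (canon_code {} Z eC (\<sigma> x)) = h' (canon_code (ren_l_rel K) V eB (Var (Inl x)))"
    if "x \<in> X" for x
  proof -
    have "g (canon_code K X eA (Var x)) = canon_code {} Z eC (\<sigma> x)"
      unfolding g_def using that by (subst quot_map_canon_code[OF assms(7) K_eqr eA]) auto
    moreover have "f (canon_code K X eA (Var x)) = canon_code (ren_l_rel K) V eB (Var (Inl x))"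
      unfolding f_def using that
      by (subst quot_map_canon_code[where RA=K]) (auto simp: ren_l_rel_def ren_l_def eA intro: eqr.base)
    ultimately show ?thesis
      using D(5)[of "canon_code K X eA (Var x)"] that by (simp add: canon_code_in_quot_alg)
  qed
  show thesis using that[of D h h'] D(1-4) gen unfolding K_def by blast
qed

lemma C_unifier_imp_eqr_subst_ker:
  fixes \<sigma> :: "'x \<Rightarrow> ('f, 'z) trm"
  assumes "eqs_wf ar E" "IT ar E TYPE(('f, nat) trm)" "finite X" "finite C" "finite Z"
    "\<And>x. wf ar (\<sigma> x)" "\<And>x. x \<in> X \<Longrightarrow> vars (\<sigma> x) \<subseteq> Z"
    "pres ar (Inl ` X \<union> Inr ` C) RA" "C_unifier ar E RA \<sigma>"
  shows "\<forall>(s, t)\<in>RA. eqr ar E (ren_l_rel (subst_ker X \<sigma>)) s t"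
proof clarify
  fix s t assume st: "(s, t) \<in> RA"
  define V where "V = Inl ` X \<union> Inr ` C"
  define RB :: "(('f, 'x + 'x) trm \<times> ('f, 'x + 'x) trm) set" where "RB = ren_l_rel (subst_ker X \<sigma>)"
  define \<tau> where "\<tau> = case_sum (\<lambda>x. ren_l (\<sigma> x)) (\<lambda>c. Var (Inr c) :: ('f, 'z + 'x) trm)"
  obtain eB :: "'x + 'x \<Rightarrow> nat" where eB: "inj_on eB V"
    using finite_imp_inj_to_nat_seg[of V] assms(3,4) unfolding V_def by blast
  obtain eC :: "'z \<Rightarrow> nat" where eC: "inj_on eC Z"
    using finite_imp_inj_to_nat_seg assms(5) by blast
  obtain D h h' where D: "inK ar E (D :: ('f, ('f, nat) trm) alg)" "hom ar (quot_alg {} Z eC) D h"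
      "hom ar (quot_alg RB V eB) D h'" "inj_on h' (fst (quot_alg RB V eB))"
      "\<And>x. x \<in> X \<Longrightarrow> h (canon_code {} Z eC (\<sigma> x)) = h' (canon_code RB V eB (Var (Inl x)))"
    using subst_ker_amalgamation[where \<sigma>=\<sigma> and V=V, OF assms(1,2,3) eB eC _ assms(6,7)]
    unfolding RB_def V_def by blast
  have st_V: "wf ar s" "vars s \<subseteq> V" "wf ar t" "vars t \<subseteq> V"
    using presD[OF assms(8) st] unfolding V_def by auto
  have B_in: "canon_code RB V eB u \<in> fst (quot_alg RB V eB)" if "wf ar u" "vars u \<subseteq> V" for u
    using that by (rule canon_code_in_quot_alg)
  \<comment> \<open>eqr_sound needs a valuation of all variables in D; d is a junk value off the generators\<close>
  define d where "d = h' (canon_code RB V eB s)"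
  define \<beta> where "\<beta> v = (case v of
      Inl z \<Rightarrow> if z \<in> Z then h (canon_code {} Z eC (Var z)) else d
    | Inr c \<Rightarrow> if Inr c \<in> V then h' (canon_code RB V eB (Var (Inr c))) else d)" for v
  have \<beta>_in: "\<beta> v \<in> fst D" for v
    using D(2,3) st_V B_in canon_code_in_quot_alg[of "Var _" Z]
    unfolding \<beta>_def d_def hom_def by (auto split: sum.split)
  have \<tau>_gen: "eval D \<beta> (\<tau> v) = h' (canon_code RB V eB (Var v))" if "v \<in> V" for v
  proof (cases v)
    case (Inl x)
    then have x: "x \<in> X" using that unfolding V_def by auto
    have "eval D \<beta> (\<tau> v) = eval D (\<lambda>z. \<beta> (Inl z)) (\<sigma> x)"
      using Inl by (simp add: \<tau>_def ren_l_def eval_subst)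
    also have "\<dots> = eval D (\<lambda>z. h (canon_code {} Z eC (Var z))) (\<sigma> x)"
      using assms(7)[OF x] by (intro eval_cong) (auto simp: \<beta>_def)
    also have "\<dots> = h (canon_code {} Z eC (\<sigma> x))"
      by (rule hom_canon_code[OF eC D(2) assms(6) assms(7)[OF x], symmetric])
    finally show ?thesis using D(5)[OF x] Inl by simp
  next
    case (Inr c)
    then show ?thesis using that unfolding \<tau>_def \<beta>_def by simp
  qed
  have \<tau>_eval: "eval D \<beta> (subst \<tau> u) = h' (canon_code RB V eB u)" if "wf ar u" "vars u \<subseteq> V" for u
  proof -
    have "eval D \<beta> (subst \<tau> u) = eval D (\<lambda>v. h' (canon_code RB V eB (Var v))) u"
      unfolding eval_subst using that \<tau>_gen by (intro eval_cong) auto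
    then show ?thesis using hom_canon_code[OF eB D(3) that] by simp
  qed
  have "eqr ar E {} (subst \<tau> s) (subst \<tau> t)"
    using assms(9) st unfolding C_unifier_def Let_def \<tau>_def by auto
  then have "eval D \<beta> (subst \<tau> s) = eval D \<beta> (subst \<tau> t)"
    by (rule eqr_sound[OF D(1) \<beta>_in])
  then have "h' (canon_code RB V eB s) = h' (canon_code RB V eB t)"
    using \<tau>_eval st_V by simp
  then have "canon_code RB V eB s = canon_code RB V eB t"
    by (rule inj_onD[OF D(4) _ B_in[OF st_V(1,2)] B_in[OF st_V(3,4)]])
  then show "eqr ar E RB s t" using canon_code_eq_iff[OF eB st_V] by simp
qed

lemma eqr_ren_l_rel_finite_support:
  assumes "finite RA" "\<forall>(s, t)\<in>RA. eqr ar E (ren_l_rel K) s t"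
  obtains D where "D \<subseteq> K" "finite D" "sub_le ar E {} (ren_l_rel D) RA"
proof -
  obtain R0 where R0: "finite R0" "R0 \<subseteq> ren_l_rel K" "\<forall>(s, t)\<in>RA. eqr ar E R0 s t"
    using eqr_finite_support_set[OF assms] by blast
  obtain D where D: "D \<subseteq> K" "finite D" "R0 = ren_l_rel D"
    using finite_subset_image[OF R0(1) R0(2)[unfolded ren_l_rel_def]] unfolding ren_l_rel_def by blast
  have "sub_le ar E {} (ren_l_rel D) RA"
    using R0(3) unfolding sub_le_def D(3) by simp
  with D(1,2) show thesis by (rule that)
qed

lemma unifier_cong:
  assumes "\<forall>(s, t)\<in>B. vars s \<subseteq> X \<and> vars t \<subseteq> X" "\<And>x. x \<in> X \<Longrightarrow> \<sigma> x = \<sigma>' x"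
  shows "unifier ar E B \<sigma> \<longleftrightarrow> unifier ar E B \<sigma>'"
proof -
  have "subst \<sigma> u = subst \<sigma>' u" if "vars u \<subseteq> X" for u
    using that assms(2) by (intro subst_cong) auto
  then show ?thesis
    unfolding unifier_def using assms(1) by (intro ball_cong refl) (auto split: prod.split)
qed

lemma C_unifier_cong:
  assumes "\<forall>(s, t)\<in>RA. vars s \<subseteq> Inl ` X \<union> Inr ` C \<and> vars t \<subseteq> Inl ` X \<union> Inr ` C"
    "\<And>x. x \<in> X \<Longrightarrow> \<sigma> x = \<sigma>' x"
  shows "C_unifier ar E RA \<sigma> \<longleftrightarrow> C_unifier ar E RA \<sigma>'"
proof -
  have "subst (case_sum (\<lambda>x. ren_l (\<sigma> x)) (\<lambda>c. Var (Inr c))) u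
      = subst (case_sum (\<lambda>x. ren_l (\<sigma>' x)) (\<lambda>c. Var (Inr c))) u"
    if "vars u \<subseteq> Inl ` X \<union> Inr ` C" for u
    using that assms(2) by (intro subst_cong) auto
  then show ?thesis
    unfolding C_unifier_def Let_def using assms(1) by (intro ball_cong refl) (auto split: prod.split)
qed

lemma unifier_subset_subst_ker: "D \<subseteq> subst_ker X \<sigma> \<Longrightarrow> unifier ar E D \<sigma>"
  unfolding unifier_def subst_ker_def by blast

lemma unifier_sub_le:
  assumes "\<And>x. wf ar (\<sigma> x)" "unifier ar E D \<sigma>" "sub_le ar E {} D B"
  shows "unifier ar E B \<sigma>"
  unfolding unifier_def
proof clarify
  fix s t assume "(s, t) \<in> B"
  then have "eqr ar E ({} \<union> D) s t" using assms(3) unfolding sub_le_def by blast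
  then show "eqr ar E {} (subst \<sigma> s) (subst \<sigma> t)"
    by (rule eqr_subst[OF _ assms(1)]) (use assms(2) in \<open>auto simp: unifier_def\<close>)
qed

lemma subst_ren_l: "subst (case_sum (\<lambda>x. ren_l (\<sigma> x)) g) (ren_l u) = ren_l (subst \<sigma> u)"
  unfolding ren_l_def subst_subst by (rule subst_cong) simp

lemma C_unifier_if_unifier:
  fixes \<sigma> :: "'x \<Rightarrow> ('f, 'z) trm" and RA :: "(('f, 'x + 'x) trm \<times> ('f, 'x + 'x) trm) set"
  assumes "\<And>x. wf ar (\<sigma> x)" "unifier ar E B \<sigma>" "sub_le ar E {} (ren_l_rel B) RA"
  shows "C_unifier ar E RA \<sigma>"
  unfolding C_unifier_def Let_def
proof clarify
  fix s t assume "(s, t) \<in> RA"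
  then have "eqr ar E ({} \<union> ren_l_rel B) s t" using assms(3) unfolding sub_le_def by blast
  then show "eqr ar E {} (subst (case_sum (\<lambda>x. ren_l (\<sigma> x)) (\<lambda>c. Var (Inr c))) s)
      (subst (case_sum (\<lambda>x. ren_l (\<sigma> x)) (\<lambda>c. Var (Inr c))) t)"
  proof (rule eqr_subst)
    show "wf ar (case_sum (\<lambda>x. ren_l (\<sigma> x)) (\<lambda>c. Var (Inr c)) v)" for v
      using assms(1) by (auto simp: wf_ren_l split: sum.split)
  next
    fix a b assume "(a, b) \<in> {} \<union> ren_l_rel B"
    then obtain u v where "(u, v) \<in> B" "a = ren_l u" "b = ren_l v" unfolding ren_l_rel_def by auto
    then show "eqr ar E {} (subst (case_sum (\<lambda>x. ren_l (\<sigma> x)) (\<lambda>c. Var (Inr c))) a)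
        (subst (case_sum (\<lambda>x. ren_l (\<sigma> x)) (\<lambda>c. Var (Inr c))) b)"
      using assms(2) by (auto simp: subst_ren_l unifier_def intro!: eqr_ren_l)
  qed
qed

end
theorem mainTheorem9:
  fixes ar :: "'f \<Rightarrow> nat"
    and E :: "(('f, 'v) trm \<times> ('f, 'v) trm) set"
    and X C :: "'x set"
    and RA :: "(('f, 'x + 'x) trm \<times> ('f, 'x + 'x) trm) set"
    and Bs :: "(('f, 'x) trm \<times> ('f, 'x) trm) set list"
  assumes "eqs_wf ar E"
    and "IT ar E TYPE(('f, nat) trm)"
    and "coherent ar E"
    and "forall_fact ar E"
    and "finite X" and "finite C"
    and "pres ar (Inl ` X \<union> Inr ` C) RA"
    and "\<forall>B\<in>set Bs. pres ar X B"
    and "\<forall>B\<in>set Bs. sub_le ar E {} (ren_l_rel B) RA"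
    and "\<forall>D. pres ar X D \<and> sub_le ar E {} (ren_l_rel D) RA \<longrightarrow> (\<exists>B\<in>set Bs. sub_le ar E {} D B)"
  shows "\<forall>(Z :: 'z set) (\<sigma> :: 'x \<Rightarrow> ('f, 'z) trm).
           finite Z \<and> (\<forall>x\<in>X. wf ar (\<sigma> x) \<and> vars (\<sigma> x) \<subseteq> Z) \<longrightarrow>
           (C_unifier ar E RA \<sigma> \<longleftrightarrow> (\<exists>B\<in>set Bs. unifier ar E B \<sigma>))"
proof (intro allI impI)
  fix Z :: "'z set" and \<sigma> :: "'x \<Rightarrow> ('f, 'z) trm"
  assume \<sigma>: "finite Z \<and> (\<forall>x\<in>X. wf ar (\<sigma> x) \<and> vars (\<sigma> x) \<subseteq> Z)"
  text \<open>Only \<sigma> on X matters; making it well-formed everywhere lets it act on derivations.\<close>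
  define \<sigma>' where "\<sigma>' x = (if x \<in> X then \<sigma> x else Var undefined)" for x
  have \<sigma>': "\<And>x. wf ar (\<sigma>' x)" "\<And>x. x \<in> X \<Longrightarrow> vars (\<sigma>' x) \<subseteq> Z" "\<And>x. x \<in> X \<Longrightarrow> \<sigma> x = \<sigma>' x"
    using \<sigma> unfolding \<sigma>'_def by auto
  have RA: "finite RA" "\<forall>(s, t)\<in>RA. vars s \<subseteq> Inl ` X \<union> Inr ` C \<and> vars t \<subseteq> Inl ` X \<union> Inr ` C"
    using assms(7) unfolding pres_def by blast+
  have "C_unifier ar E RA \<sigma>' \<longleftrightarrow> (\<exists>B\<in>set Bs. unifier ar E B \<sigma>')"
  proof
    assume "C_unifier ar E RA \<sigma>'"
    with \<sigma> have "\<forall>(s, t)\<in>RA. eqr ar E (ren_l_rel (subst_ker ar E X \<sigma>')) s t"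
      using C_unifier_imp_eqr_subst_ker[where \<sigma>=\<sigma>', OF assms(1,2,5,6) _ \<sigma>'(1,2) assms(7)] by blast
    then obtain D where D: "D \<subseteq> subst_ker ar E X \<sigma>'" "finite D" "sub_le ar E {} (ren_l_rel D) RA"
      by (rule eqr_ren_l_rel_finite_support[OF RA(1)])
    then have "pres ar X D" unfolding pres_def subst_ker_def by auto
    then obtain B where "B \<in> set Bs" "sub_le ar E {} D B" using assms(10) D(3) by blast
    then show "\<exists>B\<in>set Bs. unifier ar E B \<sigma>'"
      using unifier_sub_le[OF \<sigma>'(1) unifier_subset_subst_ker[OF D(1)]] by blast
  next
    assume "\<exists>B\<in>set Bs. unifier ar E B \<sigma>'"
    then show "C_unifier ar E RA \<sigma>'" using C_unifier_if_unifier[where \<sigma>=\<sigma>', OF \<sigma>'(1)] assms(9) by blast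
  qed
  moreover have "C_unifier ar E RA \<sigma> \<longleftrightarrow> C_unifier ar E RA \<sigma>'"
    by (rule C_unifier_cong[OF RA(2) \<sigma>'(3)])
  moreover have "unifier ar E B \<sigma> \<longleftrightarrow> unifier ar E B \<sigma>'" if "B \<in> set Bs" for B
  proof (rule unifier_cong[OF _ \<sigma>'(3)])
    show "\<forall>(s, t)\<in>B. vars s \<subseteq> X \<and> vars t \<subseteq> X"
      using assms(8) that presD[of ar X B] by blast
  qed
  ultimately show "C_unifier ar E RA \<sigma> \<longleftrightarrow> (\<exists>B\<in>set Bs. unifier ar E B \<sigma>)"
    by (simp cong: bex_cong)
qed

end
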